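(* Let $V$ be a filled sparsity pattern, $X\in\mathbb S^n_V$ positive definite with $X=LDL^T$, and $S=\mathcal P(X^{-1})$. For each $j$ with $I_j\neq\emptyset$ let $R_j$ be an upper triangular matrix with $S_{I_jI_j}=R_jR_j^T$. Define the Hessian map $\mathcal H:\mathbb S^n_V\to\mathbb S^n_V$, $\mathcal H(Y)=\mathcal P(X^{-1}YX^{-1})$, and the linear map $\mathcal R:\mathbb S^n_V\to\mathbb S^n_V$ as follows: for $Y\in\mathbb S^n_V$ let $L',D'$ be the derivatives at $t=0$ of the factors $L(t),D(t)$ in $X+tY=L(t)D(t)L(t)^T$ ($L(t)$ unit lower triangular, $D(t)$ positive diagonal), and let $W=\mathcal R(Y)\in\mathbb S^n_V$ be given by $$W_{jj}=\frac{D'_{jj}}{D_{jj}},\qquad W_{I_j j}=D_{jj}^{1/2}R_j^TL'_{I_j j}\quad(j=1,\dots,n).$$ Then for all $Y,Z\in\mathbb S^n_V$, $$\operatorname{tr}(X^{-1}YX^{-1}Z)=\operatorname{tr}\big(\mathcal R(Y)\,\mathcal R(Z)\big),$$ i.e., $\mathcal H=\mathcal R^{\mathrm{adj}}\circ\mathcal R$ where the adjoint is with respect to the trace inner product on $\mathbb S^n_V$.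
   Context: A symmetric sparsity pattern $V$ is a set of pairs $(i,j)$ with $1\le j\le i\le n$ containing all $(i,i)$; it is filled (chordal) if $i>j>k$, $(i,k)\in V$, $(j,k)\in V$ imply $(i,j)\in V$. $\mathbb S^n_V$ is the set of real symmetric $n\times n$ matrices with $X_{ij}=X_{ji}=0$ whenever $i\ge j$ and $(i,j)\notin V$, with inner product $A\bullet B=\operatorname{tr}(AB)$. $\mathcal P$ is the projection onto $\mathbb S^n_V$: $\mathcal P(A)_{ij}=A_{ij}$ if $(\max(i,j),\min(i,j))\in V$ and $0$ otherwise. For each $j$, $I_j=\{i>j:(i,j)\in V\}$ (sorted increasingly). $A_{IJ}$ is the submatrix with rows $I$ and columns $J$; $A_{Ij}$ the part of column $j$ with rows in $I$. It is known that the Cholesky factor of a positive definite matrix in $\mathbb S^n_V$ has no nonzeros outside $V$, so $L'_{ij}=0$ for $i>j$, $i\notin I_j$. *)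

theory Defs
  imports "HOL-Analysis.Analysis" "Jordan_Normal_Form.Matrix"
begin

(* Matrices are n x n real matrices of Jordan_Normal_Form; indices are 0-based (0..n-1). *)

definition sparsity_pattern :: "nat \<Rightarrow> (nat \<times> nat) set \<Rightarrow> bool" where
  "sparsity_pattern n V \<longleftrightarrow> V \<subseteq> {(i,j). j \<le> i \<and> i < n} \<and> (\<forall>i<n. (i,i) \<in> V)"

definition filled :: "(nat \<times> nat) set \<Rightarrow> bool" where
  "filled V \<longleftrightarrow> (\<forall>i j k. i > j \<and> j > k \<and> (i,k) \<in> V \<and> (j,k) \<in> V \<longrightarrow> (i,j) \<in> V)"

definition in_SV :: "nat \<Rightarrow> (nat \<times> nat) set \<Rightarrow> real mat \<Rightarrow> bool" where
  "in_SV n V A \<longleftrightarrow> A \<in> carrier_mat n n \<and> transpose_mat A = A \<and>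
     (\<forall>i<n. \<forall>j\<le>i. (i,j) \<notin> V \<longrightarrow> A $$ (i,j) = 0)"

definition proj_SV :: "nat \<Rightarrow> (nat \<times> nat) set \<Rightarrow> real mat \<Rightarrow> real mat" where
  "proj_SV n V A = mat n n (\<lambda>(i,j). if (max i j, min i j) \<in> V then A $$ (i,j) else 0)"

definition pos_def :: "nat \<Rightarrow> real mat \<Rightarrow> bool" where
  "pos_def n A \<longleftrightarrow> A \<in> carrier_mat n n \<and> transpose_mat A = A \<and>
     (\<forall>v \<in> carrier_vec n. v \<noteq> 0\<^sub>v n \<longrightarrow> v \<bullet> (A *\<^sub>v v) > 0)"

definition mat_inv :: "nat \<Rightarrow> real mat \<Rightarrow> real mat" where
  "mat_inv n A = (THE B. B \<in> carrier_mat n n \<and> A * B = 1\<^sub>m n \<and> B * A = 1\<^sub>m n)"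

definition mtrace :: "real mat \<Rightarrow> real" where
  "mtrace A = (\<Sum>i<dim_row A. A $$ (i,i))"

definition unit_lower_tri :: "nat \<Rightarrow> real mat \<Rightarrow> bool" where
  "unit_lower_tri n L \<longleftrightarrow> L \<in> carrier_mat n n \<and>
     (\<forall>i<n. L $$ (i,i) = 1 \<and> (\<forall>j<n. i < j \<longrightarrow> L $$ (i,j) = 0))"

definition pos_diag :: "nat \<Rightarrow> real mat \<Rightarrow> bool" where
  "pos_diag n D \<longleftrightarrow> D \<in> carrier_mat n n \<and>
     (\<forall>i<n. D $$ (i,i) > 0 \<and> (\<forall>j<n. i \<noteq> j \<longrightarrow> D $$ (i,j) = 0))"

definition is_ldl :: "nat \<Rightarrow> real mat \<Rightarrow> real mat \<Rightarrow> real mat \<Rightarrow> bool" where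
  "is_ldl n A L D \<longleftrightarrow> unit_lower_tri n L \<and> pos_diag n D \<and> A = L * D * transpose_mat L"

definition ldl_L :: "nat \<Rightarrow> real mat \<Rightarrow> real mat" where
  "ldl_L n A = (THE L. \<exists>D. is_ldl n A L D)"

definition ldl_D :: "nat \<Rightarrow> real mat \<Rightarrow> real mat" where
  "ldl_D n A = (THE D. \<exists>L. is_ldl n A L D)"

definition Iset :: "(nat \<times> nat) set \<Rightarrow> nat \<Rightarrow> nat set" where
  "Iset V j = {i. i > j \<and> (i,j) \<in> V}"

definition idx :: "nat set \<Rightarrow> nat \<Rightarrow> nat" where
  "idx I k = sorted_list_of_set I ! k"

(* position (0-based) of i within I sorted increasingly *)
definition pos :: "nat set \<Rightarrow> nat \<Rightarrow> nat" where
  "pos I i = card {k \<in> I. k < i}"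

definition submat :: "real mat \<Rightarrow> nat set \<Rightarrow> real mat" where
  "submat A I = mat (card I) (card I) (\<lambda>(a,b). A $$ (idx I a, idx I b))"

definition dL :: "nat \<Rightarrow> real mat \<Rightarrow> real mat \<Rightarrow> nat \<Rightarrow> nat \<Rightarrow> real" where
  "dL n X Y i j = deriv (\<lambda>t. ldl_L n (X + t \<cdot>\<^sub>m Y) $$ (i,j)) 0"

definition dD :: "nat \<Rightarrow> real mat \<Rightarrow> real mat \<Rightarrow> nat \<Rightarrow> real" where
  "dD n X Y j = deriv (\<lambda>t. ldl_D n (X + t \<cdot>\<^sub>m Y) $$ (j,j)) 0"

definition Wcol :: "nat \<Rightarrow> (nat \<times> nat) set \<Rightarrow> real mat \<Rightarrow> real mat \<Rightarrow> (nat \<Rightarrow> real mat)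
    \<Rightarrow> real mat \<Rightarrow> nat \<Rightarrow> real vec" where
  "Wcol n V X D R Y j =
     sqrt (D $$ (j,j)) \<cdot>\<^sub>v (transpose_mat (R j) *\<^sub>v
        vec (card (Iset V j)) (\<lambda>a. dL n X Y (idx (Iset V j) a) j))"

definition Rmap :: "nat \<Rightarrow> (nat \<times> nat) set \<Rightarrow> real mat \<Rightarrow> real mat \<Rightarrow> (nat \<Rightarrow> real mat)
    \<Rightarrow> real mat \<Rightarrow> real mat" where
  "Rmap n V X D R Y = mat n n (\<lambda>(i,j).
     if i = j then dD n X Y j / D $$ (j,j)
     else if j < i \<and> i \<in> Iset V j then Wcol n V X D R Y j $ pos (Iset V j) i
     else if i < j \<and> j \<in> Iset V i then Wcol n V X D R Y i $ pos (Iset V i) j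
     else 0)"

end

theory Submission
  imports Defs "Jordan_Normal_Form.Determinant"
begin

(* Differentiating  X + tY = L(t) D(t) L(t)^T  at t = 0 gives
     Y = L' D L^T + L D' L^T + L D L'^T,
   where L' is strictly lower triangular and, since V is filled, vanishes outside V.
   With Q = L^{-1} and M = Q L' (strictly lower triangular) this reads
   Q Y Q^T = M D + D' + D M^T, and X^{-1} = Q^T D^{-1} Q turns tr(X^{-1} Y X^{-1} Z) into
     B(P) = sum_j  D'_Y(j) D'_Z(j) / D_jj^2 + 2 D_jj L'_Y(:,j)^T P L'_Z(:,j)      with P = X^{-1}.
   On the other side, expanding tr(R(Y) R(Z)) entrywise and using S_{I_j I_j} = R_j R_j^T gives
   B(S) with S = P(X^{-1}); and B(S) = B(X^{-1}) because L'(:,j) is supported on I_j and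
   I_j x I_j lies in V by fillness. *)


(* The common value of both sides of the theorem, for factor derivatives lp, dp and lq, dq. *)
definition factor_form :: "nat \<Rightarrow> real mat \<Rightarrow> real mat \<Rightarrow> (nat \<Rightarrow> nat \<Rightarrow> real) \<Rightarrow> (nat \<Rightarrow> real)
    \<Rightarrow> (nat \<Rightarrow> nat \<Rightarrow> real) \<Rightarrow> (nat \<Rightarrow> real) \<Rightarrow> real" where
  "factor_form n D P lp dp lq dq = (\<Sum>j<n. dp j * dq j / (D $$ (j,j) * D $$ (j,j))
      + 2 * D $$ (j,j) * (\<Sum>a<n. \<Sum>b<n. lp a j * P $$ (a,b) * lq b j))"


lemma mult_diag_right_index:
  fixes A G :: "real mat"
  assumes A: "A \<in> carrier_mat m n" and G: "G \<in> carrier_mat n n" and Gd: "diagonal_mat G"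
    and ij: "i < m" "j < n"
  shows "(A * G) $$ (i,j) = A $$ (i,j) * G $$ (j,j)"
proof -
  have "(A * G) $$ (i,j) = (\<Sum>k<n. A $$ (i,k) * G $$ (k,j))"
    using A G ij by (simp add: scalar_prod_def atLeast0LessThan)
  also have "\<dots> = (\<Sum>k<n. if k = j then A $$ (i,j) * G $$ (j,j) else 0)"
    by (rule sum.cong) (use G Gd ij in \<open>auto simp: diagonal_mat_def\<close>)
  also have "\<dots> = A $$ (i,j) * G $$ (j,j)" using ij by simp
  finally show ?thesis .
qed

lemma mult_diag_left_index:
  fixes A G :: "real mat"
  assumes A: "A \<in> carrier_mat n m" and G: "G \<in> carrier_mat n n" and Gd: "diagonal_mat G"
    and ij: "i < n" "j < m"
  shows "(G * A) $$ (i,j) = G $$ (i,i) * A $$ (i,j)"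
proof -
  have "(G * A) $$ (i,j) = (\<Sum>k<n. G $$ (i,k) * A $$ (k,j))"
    using A G ij by (simp add: scalar_prod_def atLeast0LessThan)
  also have "\<dots> = (\<Sum>k<n. if k = i then G $$ (i,i) * A $$ (i,j) else 0)"
    by (rule sum.cong) (use G Gd ij in \<open>auto simp: diagonal_mat_def\<close>)
  also have "\<dots> = G $$ (i,i) * A $$ (i,j)" using ij by simp
  finally show ?thesis .
qed

lemma congruence_diag_index:
  fixes A B G :: "real mat"
  assumes A: "A \<in> carrier_mat m n" and B: "B \<in> carrier_mat p n"
    and G: "G \<in> carrier_mat n n" and Gd: "diagonal_mat G" and ij: "i < m" "j < p"
  shows "(A * G * transpose_mat B) $$ (i,j) = (\<Sum>k<n. A $$ (i,k) * G $$ (k,k) * B $$ (j,k))"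
proof -
  have "(A * G * transpose_mat B) $$ (i,j) = (\<Sum>k<n. (A * G) $$ (i,k) * B $$ (j,k))"
    using A B G ij by (simp add: scalar_prod_def atLeast0LessThan del: assoc_mult_mat)
  also have "\<dots> = (\<Sum>k<n. A $$ (i,k) * G $$ (k,k) * B $$ (j,k))"
    by (rule sum.cong) (use mult_diag_right_index[OF A G Gd] ij in auto)
  finally show ?thesis .
qed

lemma mtrace_comm:
  fixes A B :: "real mat"
  assumes "A \<in> carrier_mat n m" "B \<in> carrier_mat m n"
  shows "mtrace (A * B) = mtrace (B * A)"
proof -
  have "mtrace (A * B) = (\<Sum>i<n. \<Sum>k<m. A $$ (i,k) * B $$ (k,i))"
    using assms by (simp add: mtrace_def scalar_prod_def atLeast0LessThan)
  also have "\<dots> = (\<Sum>k<m. \<Sum>i<n. B $$ (k,i) * A $$ (i,k))"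
    by (subst sum.swap) (simp add: mult.commute)
  also have "\<dots> = mtrace (B * A)"
    using assms by (simp add: mtrace_def scalar_prod_def atLeast0LessThan)
  finally show ?thesis .
qed

definition mat_of :: "nat \<Rightarrow> (nat \<Rightarrow> nat \<Rightarrow> real) \<Rightarrow> real mat" where
  "mat_of n f = mat n n (\<lambda>(i,j). f i j)"

definition diag_of :: "nat \<Rightarrow> (nat \<Rightarrow> real) \<Rightarrow> real mat" where
  "diag_of n d = mat n n (\<lambda>(i,j). if i = j then d i else 0)"

lemma mat_of_carrier[simp]: "mat_of n f \<in> carrier_mat n n"
  and diag_of_carrier[simp]: "diag_of n d \<in> carrier_mat n n"
  and mat_of_dims[simp]: "dim_row (mat_of n f) = n" "dim_col (mat_of n f) = n"
  and diag_of_dims[simp]: "dim_row (diag_of n d) = n" "dim_col (diag_of n d) = n"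
  by (simp_all add: mat_of_def diag_of_def)

lemma mat_of_index[simp]: "i < n \<Longrightarrow> j < n \<Longrightarrow> mat_of n f $$ (i,j) = f i j"
  by (simp add: mat_of_def)

lemma diag_of_index: "i < n \<Longrightarrow> j < n \<Longrightarrow> diag_of n d $$ (i,j) = (if i = j then d i else 0)"
  by (simp add: diag_of_def)

lemma diag_of_diagonal: "diagonal_mat (diag_of n d)"
  by (simp add: diagonal_mat_def diag_of_def)

lemma pos_diag_diagonal: "pos_diag n D \<Longrightarrow> diagonal_mat D"
  by (auto simp: pos_diag_def diagonal_mat_def)


(* The LDL^T recursion: for a symmetric array a, ldl_rec a j j is the pivot D_jj and, for i > j,
   ldl_rec a i j is the multiplier L_ij (Crout's column-by-column formulas). *)
function ldl_rec :: "(nat \<Rightarrow> nat \<Rightarrow> real) \<Rightarrow> nat \<Rightarrow> nat \<Rightarrow> real" where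
  "ldl_rec a i j = (if i < j then 0
     else if i = j then a j j - (\<Sum>k<j. (ldl_rec a j k)^2 * ldl_rec a k k)
     else (a i j - (\<Sum>k<j. ldl_rec a i k * ldl_rec a j k * ldl_rec a k k)) / ldl_rec a j j)"
  by pat_completeness auto
termination by (relation "measures [\<lambda>(a,i,j). j, \<lambda>(a,i,j). i]") auto

declare ldl_rec.simps[simp del]

lemma ldl_rec_diag: "ldl_rec a j j = a j j - (\<Sum>k<j. (ldl_rec a j k)^2 * ldl_rec a k k)"
  by (subst ldl_rec.simps) simp

lemma ldl_rec_off: "j < i \<Longrightarrow>
    ldl_rec a i j = (a i j - (\<Sum>k<j. ldl_rec a i k * ldl_rec a j k * ldl_rec a k k)) / ldl_rec a j j"
  by (subst ldl_rec.simps) simp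

definition ldl_rec_L :: "(nat \<Rightarrow> nat \<Rightarrow> real) \<Rightarrow> nat \<Rightarrow> nat \<Rightarrow> real" where
  "ldl_rec_L a i j = (if i = j then 1 else if j < i then ldl_rec a i j else 0)"

lemma ldl_rec_unique:
  fixes l :: "nat \<Rightarrow> nat \<Rightarrow> real" and d :: "nat \<Rightarrow> real"
  assumes l1: "\<And>i. i < n \<Longrightarrow> l i i = 1"
    and l0: "\<And>i j. i < j \<Longrightarrow> j < n \<Longrightarrow> l i j = 0"
    and dnz: "\<And>j. j < n \<Longrightarrow> d j \<noteq> 0"
    and eq: "\<And>i j. i < n \<Longrightarrow> j < n \<Longrightarrow> a i j = (\<Sum>k<n. l i k * d k * l j k)"
  shows "j \<le> i \<Longrightarrow> i < n \<Longrightarrow> ldl_rec a i j = (if i = j then d j else l i j)"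
proof (induction j arbitrary: i rule: less_induct)
  case (less j)
  have jn: "j < n" using less by auto
  have split: "a i j = (\<Sum>k<j. l i k * d k * l j k) + l i j * d j" if "i < n" for i
  proof -
    have "a i j = (\<Sum>k<n. l i k * d k * l j k)" using eq that jn by auto
    also have "\<dots> = (\<Sum>k\<in>{..<Suc j}. l i k * d k * l j k)"
      by (rule sum.mono_neutral_right) (use jn l0 in auto)
    also have "\<dots> = (\<Sum>k<j. l i k * d k * l j k) + l i j * d j"
      using l1 jn by simp
    finally show ?thesis .
  qed
  have sums: "(\<Sum>k<j. l i k * d k * l j k) = (\<Sum>k<j. ldl_rec a i k * ldl_rec a j k * ldl_rec a k k)"
    if "j \<le> i" "i < n" for i
    by (rule sum.cong) (use less.IH that jn in auto)
  have diag: "ldl_rec a j j = d j"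
    using ldl_rec_diag[of a j] split[OF jn] sums[of j] l1 jn by (simp add: power2_eq_square)
  show ?case
  proof (cases "i = j")
    case True
    then show ?thesis using diag by simp
  next
    case False
    then have ji: "j < i" using less by auto
    have "ldl_rec a i j = (a i j - (\<Sum>k<j. ldl_rec a i k * ldl_rec a j k * ldl_rec a k k)) / d j"
      using ldl_rec_off[OF ji, of a] diag by simp
    also have "\<dots> = l i j" using split[of i] sums[of i] less dnz[OF jn] ji by simp
    finally show ?thesis using ji by simp
  qed
qed

lemma ldl_rec_factors:
  assumes sym: "\<And>i j. i < n \<Longrightarrow> j < n \<Longrightarrow> a i j = a j i"
    and dnz: "\<And>j. j < n \<Longrightarrow> ldl_rec a j j \<noteq> 0"
    and ij: "i < n" "j < n"
  shows "a i j = (\<Sum>k<n. ldl_rec_L a i k * ldl_rec a k k * ldl_rec_L a j k)"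
proof -
  have lower: "a i j = (\<Sum>k<n. ldl_rec_L a i k * ldl_rec a k k * ldl_rec_L a j k)"
    if "j \<le> i" "i < n" for i j
  proof -
    have jn: "j < n" using that by auto
    have "(\<Sum>k<n. ldl_rec_L a i k * ldl_rec a k k * ldl_rec_L a j k)
        = (\<Sum>k\<in>{..<Suc j}. ldl_rec_L a i k * ldl_rec a k k * ldl_rec_L a j k)"
      by (rule sum.mono_neutral_right) (use jn in \<open>auto simp: ldl_rec_L_def\<close>)
    also have "\<dots> = (\<Sum>k<j. ldl_rec a i k * ldl_rec a j k * ldl_rec a k k) + ldl_rec_L a i j * ldl_rec a j j"
      using that by (simp add: ldl_rec_L_def mult_ac)
    finally have e: "(\<Sum>k<n. ldl_rec_L a i k * ldl_rec a k k * ldl_rec_L a j k)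
        = (\<Sum>k<j. ldl_rec a i k * ldl_rec a j k * ldl_rec a k k) + ldl_rec_L a i j * ldl_rec a j j" .
    show ?thesis
    proof (cases "i = j")
      case True
      then show ?thesis using e ldl_rec_diag[of a j] by (simp add: ldl_rec_L_def power2_eq_square)
    next
      case False
      then have ji: "j < i" using that by auto
      show ?thesis using e ldl_rec_off[OF ji, of a] dnz[OF jn] ji by (simp add: ldl_rec_L_def)
    qed
  qed
  show ?thesis
  proof (cases "j \<le> i")
    case True then show ?thesis using lower ij by auto
  next
    case False
    then have "a j i = (\<Sum>k<n. ldl_rec_L a j k * ldl_rec a k k * ldl_rec_L a i k)" using lower ij by auto
    then show ?thesis using sym ij by (simp add: mult_ac)
  qed
qed

lemma ldl_rec_no_fill:
  assumes fil: "filled V"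
    and az: "\<And>i j. j < i \<Longrightarrow> i < n \<Longrightarrow> (i,j) \<notin> V \<Longrightarrow> a i j = 0"
  shows "j < i \<Longrightarrow> i < n \<Longrightarrow> (i,j) \<notin> V \<Longrightarrow> ldl_rec a i j = 0"
proof (induction j arbitrary: i rule: less_induct)
  case (less j)
  have "ldl_rec a i k * ldl_rec a j k = 0" if kj: "k < j" for k
  proof (rule ccontr)
    assume nz: "ldl_rec a i k * ldl_rec a j k \<noteq> 0"
    have "ldl_rec a m k = 0" if "m = i \<or> m = j" "(m,k) \<notin> V" for m
      using less.IH[OF kj, of m] that kj less.prems by auto
    then have "(i,k) \<in> V" "(j,k) \<in> V" using nz by auto
    then have "(i,j) \<in> V" using fil[unfolded filled_def] less.prems kj by blast
    then show False using less.prems by auto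
  qed
  then have "(\<Sum>k<j. ldl_rec a i k * ldl_rec a j k * ldl_rec a k k) = 0"
    by (auto intro!: sum.neutral)
  then show ?case using ldl_rec_off[OF less.prems(1), of a] az less.prems by simp
qed

definition ldl_rec_Lmat :: "nat \<Rightarrow> (nat \<Rightarrow> nat \<Rightarrow> real) \<Rightarrow> real mat" where
  "ldl_rec_Lmat n a = mat_of n (ldl_rec_L a)"

definition ldl_rec_Dmat :: "nat \<Rightarrow> (nat \<Rightarrow> nat \<Rightarrow> real) \<Rightarrow> real mat" where
  "ldl_rec_Dmat n a = diag_of n (\<lambda>j. ldl_rec a j j)"

lemma is_ldl_index:
  assumes "is_ldl n A L D" "i < n" "j < n"
  shows "A $$ (i,j) = (\<Sum>k<n. L $$ (i,k) * D $$ (k,k) * L $$ (j,k))"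
  using assms congruence_diag_index[of L n n L n D i j] pos_diag_diagonal[of n D]
  unfolding is_ldl_def unit_lower_tri_def pos_diag_def by auto

lemma ldl_rec_is_ldl:
  assumes A: "A \<in> carrier_mat n n"
    and Aa: "\<And>i j. i < n \<Longrightarrow> j < n \<Longrightarrow> A $$ (i,j) = a i j"
    and sym: "\<And>i j. i < n \<Longrightarrow> j < n \<Longrightarrow> a i j = a j i"
    and pos: "\<And>j. j < n \<Longrightarrow> ldl_rec a j j > 0"
  shows "ldl_L n A = ldl_rec_Lmat n a" "ldl_D n A = ldl_rec_Dmat n a"
proof -
  have ex: "is_ldl n A (ldl_rec_Lmat n a) (ldl_rec_Dmat n a)"
    unfolding is_ldl_def unit_lower_tri_def pos_diag_def
  proof (intro conjI allI impI)
    show "A = ldl_rec_Lmat n a * ldl_rec_Dmat n a * transpose_mat (ldl_rec_Lmat n a)"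
    proof (rule eq_matI)
      fix i j assume "i < dim_row (ldl_rec_Lmat n a * ldl_rec_Dmat n a * transpose_mat (ldl_rec_Lmat n a))"
        "j < dim_col (ldl_rec_Lmat n a * ldl_rec_Dmat n a * transpose_mat (ldl_rec_Lmat n a))"
      then have i: "i < n" and j: "j < n" by (auto simp: ldl_rec_Lmat_def)
      have "(ldl_rec_Lmat n a * ldl_rec_Dmat n a * transpose_mat (ldl_rec_Lmat n a)) $$ (i,j)
         = (\<Sum>k<n. ldl_rec_L a i k * ldl_rec a k k * ldl_rec_L a j k)"
        using congruence_diag_index[of "ldl_rec_Lmat n a" n n "ldl_rec_Lmat n a" n "ldl_rec_Dmat n a" i j] i j
        by (simp add: ldl_rec_Lmat_def ldl_rec_Dmat_def diag_of_diagonal diag_of_index)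
      also have "\<dots> = a i j"
        by (rule ldl_rec_factors[symmetric]) (use sym pos i j in \<open>auto simp: less_le\<close>)
      finally show "A $$ (i,j) = (ldl_rec_Lmat n a * ldl_rec_Dmat n a * transpose_mat (ldl_rec_Lmat n a)) $$ (i,j)"
        using Aa i j by simp
    qed (use A in \<open>auto simp: ldl_rec_Lmat_def\<close>)
  qed (auto simp: ldl_rec_Lmat_def ldl_rec_Dmat_def ldl_rec_L_def diag_of_index pos)
  have uniq: "L = ldl_rec_Lmat n a \<and> D = ldl_rec_Dmat n a" if ldl: "is_ldl n A L D" for L D
  proof -
    have e: "ldl_rec a i j = (if i = j then D $$ (j,j) else L $$ (i,j))" if "j \<le> i" "i < n" for i j
      by (rule ldl_rec_unique[where l = "\<lambda>i j. L $$ (i,j)" and d = "\<lambda>j. D $$ (j,j)" and n = n])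
        (use is_ldl_index[OF ldl] Aa ldl that in \<open>auto simp: is_ldl_def unit_lower_tri_def pos_diag_def\<close>)
    have "L = ldl_rec_Lmat n a"
      by (rule eq_matI) (use e ldl in \<open>auto simp: ldl_rec_Lmat_def ldl_rec_L_def is_ldl_def unit_lower_tri_def\<close>)
    moreover have "D = ldl_rec_Dmat n a"
      by (rule eq_matI) (use e ldl in \<open>auto simp: ldl_rec_Dmat_def diag_of_index is_ldl_def pos_diag_def\<close>)
    ultimately show ?thesis by simp
  qed
  show "ldl_L n A = ldl_rec_Lmat n a" unfolding ldl_L_def
    by (rule the_equality) (use ex uniq in blast)+
  show "ldl_D n A = ldl_rec_Dmat n a" unfolding ldl_D_def
    by (rule the_equality) (use ex uniq in blast)+
qed

lemma ldl_rec_differentiable: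
  fixes x y :: "nat \<Rightarrow> nat \<Rightarrow> real"
  assumes nz: "\<And>k. k \<le> j \<Longrightarrow> ldl_rec (\<lambda>i j. x i j + 0 * y i j) k k \<noteq> 0"
  shows "(\<lambda>t. ldl_rec (\<lambda>i j. x i j + t * y i j) i j) differentiable (at 0)"
  using nz
proof (induction j arbitrary: i rule: less_induct)
  case (less j)
  let ?a = "\<lambda>t i j. x i j + t * y i j"
  have IH: "\<And>k m. k < j \<Longrightarrow> (\<lambda>t. ldl_rec (?a t) m k) differentiable (at 0)"
    using less by auto
  have diagj: "(\<lambda>t. ldl_rec (?a t) j j) differentiable (at 0)"
  proof -
    have eq: "(\<lambda>t. ldl_rec (?a t) j j)
        = (\<lambda>t. ?a t j j - (\<Sum>k<j. (ldl_rec (?a t) j k)^2 * ldl_rec (?a t) k k))"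
      by (rule ext, rule ldl_rec_diag)
    show ?thesis unfolding eq by (intro derivative_intros ballI) (auto intro: IH)
  qed
  consider "i < j" | "i = j" | "j < i" by linarith
  then show ?case
  proof cases
    case 1
    then show ?thesis by (subst ldl_rec.simps) simp
  next
    case 2
    then show ?thesis using diagj by simp
  next
    case 3
    have eq: "(\<lambda>t. ldl_rec (?a t) i j) = (\<lambda>t. (?a t i j - (\<Sum>k<j. ldl_rec (?a t) i k *
        ldl_rec (?a t) j k * ldl_rec (?a t) k k)) / ldl_rec (?a t) j j)"
      using 3 by (intro ext, rule ldl_rec_off)
    show ?thesis unfolding eq
      by (intro derivative_intros ballI diagj) (use less.prems[of j] in \<open>auto intro: IH\<close>)
  qed
qed


definition pencil :: "real mat \<Rightarrow> real mat \<Rightarrow> real \<Rightarrow> nat \<Rightarrow> nat \<Rightarrow> real" where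
  "pencil X Y t = (\<lambda>i j. X $$ (i,j) + t * Y $$ (i,j))"

lemma in_SV_sym: "in_SV n V A \<Longrightarrow> i < n \<Longrightarrow> j < n \<Longrightarrow> A $$ (i,j) = A $$ (j,i)"
  unfolding in_SV_def by (metis carrier_matD(1,2) index_transpose_mat(1))

lemma in_SV_zero: "in_SV n V A \<Longrightarrow> j < i \<Longrightarrow> i < n \<Longrightarrow> (i,j) \<notin> V \<Longrightarrow> A $$ (i,j) = 0"
  unfolding in_SV_def by auto

context
  fixes n V X Y L D
  assumes fil: "filled V" and XV: "in_SV n V X" and YV: "in_SV n V Y" and ldl: "is_ldl n X L D"
begin

lemma ldl_rec_pencil_0:
  assumes "j \<le> i" "i < n"
  shows "ldl_rec (pencil X Y 0) i j = (if i = j then D $$ (j,j) else L $$ (i,j))"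
  by (rule ldl_rec_unique[where l = "\<lambda>i j. L $$ (i,j)" and d = "\<lambda>j. D $$ (j,j)" and n = n])
    (use is_ldl_index[OF ldl] ldl assms in \<open>auto simp: pencil_def is_ldl_def unit_lower_tri_def pos_diag_def\<close>)

lemma pivot_pencil_0: "k < n \<Longrightarrow> ldl_rec (pencil X Y 0) k k = D $$ (k,k)"
  using ldl_rec_pencil_0[of k k] by simp

lemma ldl_rec_L_pencil_0: "i < n \<Longrightarrow> j < n \<Longrightarrow> ldl_rec_L (pencil X Y 0) i j = L $$ (i,j)"
  using ldl_rec_pencil_0[of j i] ldl by (auto simp: ldl_rec_L_def is_ldl_def unit_lower_tri_def)

lemma pivot_pencil_0_pos: "k < n \<Longrightarrow> ldl_rec (pencil X Y 0) k k > 0"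
  using pivot_pencil_0 ldl by (simp add: is_ldl_def pos_diag_def)

lemma ldl_rec_pencil_differentiable:
  "j < n \<Longrightarrow> (\<lambda>t. ldl_rec (pencil X Y t) i j) differentiable (at 0)"
proof -
  assume j: "j < n"
  have "(\<lambda>t. ldl_rec (\<lambda>i j. X $$ (i,j) + t * Y $$ (i,j)) i j) differentiable (at 0)"
  proof (rule ldl_rec_differentiable)
    fix k assume "k \<le> j"
    then show "ldl_rec (\<lambda>i j. X $$ (i,j) + 0 * Y $$ (i,j)) k k \<noteq> 0"
      using pivot_pencil_0_pos[of k] j by (simp add: pencil_def)
  qed
  then show ?thesis by (simp add: pencil_def)
qed

lemma ldl_rec_L_pencil_differentiable:
  "j < n \<Longrightarrow> (\<lambda>t. ldl_rec_L (pencil X Y t) i j) differentiable (at 0)"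
  unfolding ldl_rec_L_def by (cases "i = j"; cases "j < i") (auto intro: ldl_rec_pencil_differentiable)

lemma eventually_pivots_pos: "eventually (\<lambda>t. \<forall>k<n. ldl_rec (pencil X Y t) k k > 0) (nhds 0)"
proof -
  have "eventually (\<lambda>t. ldl_rec (pencil X Y t) k k > 0) (nhds 0)" if k: "k < n" for k
  proof -
    have "isCont (\<lambda>t. ldl_rec (pencil X Y t) k k) 0"
      using ldl_rec_pencil_differentiable[OF k] differentiable_imp_continuous_within by blast
    then show ?thesis
      using pivot_pencil_0_pos[OF k] by (simp add: isCont_def eventually_nhds_conv_at order_tendstoD(1))
  qed
  then have "eventually (\<lambda>t. \<forall>k\<in>{..<n}. ldl_rec (pencil X Y t) k k > 0) (nhds 0)"
    by (intro eventually_ball_finite) auto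
  then show ?thesis by (rule eventually_mono) simp
qed

lemma eventually_ldl_pencil: "eventually (\<lambda>t. ldl_L n (X + t \<cdot>\<^sub>m Y) = ldl_rec_Lmat n (pencil X Y t)
    \<and> ldl_D n (X + t \<cdot>\<^sub>m Y) = ldl_rec_Dmat n (pencil X Y t)) (nhds 0)"
  using eventually_pivots_pos
proof (rule eventually_mono)
  fix t assume "\<forall>k<n. ldl_rec (pencil X Y t) k k > 0"
  moreover have "X + t \<cdot>\<^sub>m Y \<in> carrier_mat n n" "\<And>i j. i < n \<Longrightarrow> j < n \<Longrightarrow> pencil X Y t i j = pencil X Y t j i"
    using XV YV in_SV_sym[OF XV] in_SV_sym[OF YV] by (auto simp: in_SV_def pencil_def)
  moreover have "\<And>i j. i < n \<Longrightarrow> j < n \<Longrightarrow> (X + t \<cdot>\<^sub>m Y) $$ (i,j) = pencil X Y t i j"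
    using XV YV by (auto simp: in_SV_def pencil_def)
  ultimately show "ldl_L n (X + t \<cdot>\<^sub>m Y) = ldl_rec_Lmat n (pencil X Y t)
      \<and> ldl_D n (X + t \<cdot>\<^sub>m Y) = ldl_rec_Dmat n (pencil X Y t)"
    using ldl_rec_is_ldl by blast
qed

lemma DERIV_ldl_L: "i < n \<Longrightarrow> j < n \<Longrightarrow> DERIV (\<lambda>t. ldl_rec_L (pencil X Y t) i j) 0 :> dL n X Y i j"
proof -
  assume ij: "i < n" "j < n"
  have "dL n X Y i j = deriv (\<lambda>t. ldl_rec_L (pencil X Y t) i j) 0"
    unfolding dL_def
    by (rule deriv_cong_ev[OF eventually_mono[OF eventually_ldl_pencil]]) (use ij in \<open>auto simp: ldl_rec_Lmat_def\<close>)
  then show ?thesis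
    using ldl_rec_L_pencil_differentiable[OF ij(2)] DERIV_deriv_iff_real_differentiable by metis
qed

lemma DERIV_ldl_D: "j < n \<Longrightarrow> DERIV (\<lambda>t. ldl_rec (pencil X Y t) j j) 0 :> dD n X Y j"
proof -
  assume j: "j < n"
  have "dD n X Y j = deriv (\<lambda>t. ldl_rec (pencil X Y t) j j) 0"
    unfolding dD_def
    by (rule deriv_cong_ev[OF eventually_mono[OF eventually_ldl_pencil]]) (use j in \<open>auto simp: ldl_rec_Dmat_def diag_of_index\<close>)
  then show ?thesis
    using ldl_rec_pencil_differentiable[OF j] DERIV_deriv_iff_real_differentiable by metis
qed

lemma ldl_derivative_identity:
  assumes i: "i < n" and j: "j < n"
  shows "Y $$ (i,j) = (\<Sum>k<n. dL n X Y i k * D $$ (k,k) * L $$ (j,k)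
      + L $$ (i,k) * dD n X Y k * L $$ (j,k) + L $$ (i,k) * D $$ (k,k) * dL n X Y j k)"
proof -
  let ?prod = "\<lambda>t. \<Sum>k<n. ldl_rec_L (pencil X Y t) i k * ldl_rec (pencil X Y t) k k * ldl_rec_L (pencil X Y t) j k"
  have dsum: "DERIV ?prod 0 :> (\<Sum>k<n. dL n X Y i k * D $$ (k,k) * L $$ (j,k)
      + L $$ (i,k) * dD n X Y k * L $$ (j,k) + L $$ (i,k) * D $$ (k,k) * dL n X Y j k)"
  proof (rule DERIV_sum)
    fix k assume k: "k \<in> {..<n}"
    have "DERIV (\<lambda>t. ldl_rec_L (pencil X Y t) i k * ldl_rec (pencil X Y t) k k * ldl_rec_L (pencil X Y t) j k) 0 :>
      (dL n X Y i k * ldl_rec (pencil X Y 0) k k + dD n X Y k * ldl_rec_L (pencil X Y 0) i k) * ldl_rec_L (pencil X Y 0) j k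
       + dL n X Y j k * (ldl_rec_L (pencil X Y 0) i k * ldl_rec (pencil X Y 0) k k)"
      by (intro DERIV_mult DERIV_ldl_L DERIV_ldl_D) (use i j k in auto)
    then show "DERIV (\<lambda>t. ldl_rec_L (pencil X Y t) i k * ldl_rec (pencil X Y t) k k * ldl_rec_L (pencil X Y t) j k) 0 :>
      dL n X Y i k * D $$ (k,k) * L $$ (j,k)
      + L $$ (i,k) * dD n X Y k * L $$ (j,k) + L $$ (i,k) * D $$ (k,k) * dL n X Y j k"
      using pivot_pencil_0[of k] ldl_rec_L_pencil_0[of i k] ldl_rec_L_pencil_0[of j k] i j k
      by (simp add: algebra_simps)
  qed
  have ev: "eventually (\<lambda>t. pencil X Y t i j = ?prod t) (nhds 0)"
    using eventually_pivots_pos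
    by (rule eventually_mono) (rule ldl_rec_factors, use in_SV_sym[OF XV] in_SV_sym[OF YV] i j in \<open>auto simp: pencil_def\<close>)
  have "DERIV (\<lambda>t. pencil X Y t i j) 0 :> Y $$ (i,j)"
    unfolding pencil_def by (auto intro!: derivative_eq_intros)
  then have "DERIV ?prod 0 :> Y $$ (i,j)"
    using DERIV_cong_ev[OF refl ev refl] by simp
  then show ?thesis using dsum DERIV_unique by blast
qed

lemma dL_outside_pattern:
  assumes i: "i < n" and j: "j < n" and nv: "\<not> (j < i \<and> (i,j) \<in> V)"
  shows "dL n X Y i j = 0"
proof -
  have "ldl_rec_L (pencil X Y t) i j = (if i = j then 1 else 0)" for t
  proof (cases "j < i")
    case True
    then have "ldl_rec (pencil X Y t) i j = 0"
      using ldl_rec_no_fill[OF fil _ True i] nv in_SV_zero[OF XV] in_SV_zero[OF YV] by (auto simp: pencil_def)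
    then show ?thesis using True by (simp add: ldl_rec_L_def)
  qed (auto simp: ldl_rec_L_def)
  then have "DERIV (\<lambda>t. ldl_rec_L (pencil X Y t) i j) 0 :> 0" by simp
  then show ?thesis using DERIV_ldl_L[OF i j] DERIV_unique by blast
qed

end


(* A unit lower triangular matrix is invertible (its determinant is 1) ... *)
lemma unit_lower_tri_invertible:
  fixes L :: "real mat"
  assumes "unit_lower_tri n L"
  shows "\<exists>Q \<in> carrier_mat n n. L * Q = 1\<^sub>m n \<and> Q * L = 1\<^sub>m n"
proof -
  have LC: "L \<in> carrier_mat n n" using assms by (simp add: unit_lower_tri_def)
  have "det L = prod_list (diag_mat L)"
    by (rule det_lower_triangular[where n = n]) (use assms in \<open>auto simp: unit_lower_tri_def\<close>)
  also have "\<dots> = 1" using assms LC unfolding prod_list_diag_prod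
    by (simp add: unit_lower_tri_def)
  finally have "det L \<noteq> 0" by simp
  from det_non_zero_imp_unit[OF LC this, of undefined]
  show ?thesis unfolding Units_def ring_mat_simps by auto
qed

lemma unit_lower_tri_inverse_lower:
  fixes L Q :: "real mat"
  assumes Lu: "unit_lower_tri n L" and QC: "Q \<in> carrier_mat n n" and LQ: "L * Q = 1\<^sub>m n"
  shows "i < j \<Longrightarrow> j < n \<Longrightarrow> Q $$ (i,j) = 0"
proof (induction i arbitrary: j rule: less_induct)
  case (less i)
  have LC: "L \<in> carrier_mat n n" using Lu by (simp add: unit_lower_tri_def)
  have i: "i < n" using less by auto
  have "0 = (L * Q) $$ (i,j)" using LQ less i by simp
  also have "\<dots> = (\<Sum>k<n. L $$ (i,k) * Q $$ (k,j))"
    using LC QC less i by (simp add: scalar_prod_def atLeast0LessThan)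
  also have "\<dots> = (\<Sum>k\<in>{i}. L $$ (i,k) * Q $$ (k,j))"
  proof (rule sum.mono_neutral_right)
    show "\<forall>k\<in>{..<n} - {i}. L $$ (i,k) * Q $$ (k,j) = 0"
    proof
      fix k assume k: "k \<in> {..<n} - {i}"
      show "L $$ (i,k) * Q $$ (k,j) = 0"
      proof (cases "k < i")
        case True
        then show ?thesis using less.IH[of k j] less by auto
      next
        case False
        then have "i < k" using k by auto
        then show ?thesis using Lu k by (auto simp: unit_lower_tri_def)
      qed
    qed
  qed (use i in auto)
  also have "\<dots> = Q $$ (i,j)" using Lu i by (simp add: unit_lower_tri_def)
  finally show ?case by simp
qed

lemma mat_mult_assoc_n: "A \<in> carrier_mat n n \<Longrightarrow> B \<in> carrier_mat n n \<Longrightarrow> C \<in> carrier_mat n n \<Longrightarrow>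
    A * B * C = A * (B * (C::real mat))"
  and mat_mult_carrier_n: "A \<in> carrier_mat n n \<Longrightarrow> B \<in> carrier_mat n n \<Longrightarrow> A * (B::real mat) \<in> carrier_mat n n"
  and mat_add_carrier_n: "A \<in> carrier_mat n n \<Longrightarrow> B \<in> carrier_mat n n \<Longrightarrow> A + (B::real mat) \<in> carrier_mat n n"
  and mat_distrib_left_n: "A \<in> carrier_mat n n \<Longrightarrow> B \<in> carrier_mat n n \<Longrightarrow> C \<in> carrier_mat n n \<Longrightarrow>
    A * (B + C) = A * B + A * (C::real mat)"
  and mat_distrib_right_n: "A \<in> carrier_mat n n \<Longrightarrow> B \<in> carrier_mat n n \<Longrightarrow> C \<in> carrier_mat n n \<Longrightarrow>
    (A + B) * C = A * C + B * (C::real mat)"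
  and mat_add_assoc_n: "A \<in> carrier_mat n n \<Longrightarrow> B \<in> carrier_mat n n \<Longrightarrow> C \<in> carrier_mat n n \<Longrightarrow>
    (A + B) + C = A + (B + (C::real mat))"
  and mat_one_right_n: "A \<in> carrier_mat n n \<Longrightarrow> A * 1\<^sub>m n = (A::real mat)"
  and mat_one_left_n: "A \<in> carrier_mat n n \<Longrightarrow> 1\<^sub>m n * A = (A::real mat)"
  subgoal by (rule assoc_mult_mat)
  subgoal by simp
  subgoal by simp
  subgoal by (rule mult_add_distrib_mat)
  subgoal by (rule add_mult_distrib_mat)
  subgoal by (rule assoc_add_mat)
  subgoal by simp
  subgoal by simp
  done

lemma mat_cancel_left: "A \<in> carrier_mat n n \<Longrightarrow> B \<in> carrier_mat n n \<Longrightarrow> C \<in> carrier_mat n n \<Longrightarrow>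
    A * B = 1\<^sub>m n \<Longrightarrow> A * (B * C) = (C::real mat)"
  by (simp flip: mat_mult_assoc_n)

(* Throughout, X = L D L^T with inverse factor Q = L^{-1}, so that X^{-1} = Q^T D^{-1} Q. *)
context
  fixes n :: nat and L D Q :: "real mat"
  assumes Lu: "unit_lower_tri n L" and Dd: "pos_diag n D" and QC[simp]: "Q \<in> carrier_mat n n"
    and LQ: "L * Q = 1\<^sub>m n" and QL: "Q * L = 1\<^sub>m n"
begin

lemma L_carrier[simp]: "L \<in> carrier_mat n n" using Lu by (simp add: unit_lower_tri_def)
lemma D_carrier[simp]: "D \<in> carrier_mat n n" using Dd by (simp add: pos_diag_def)
lemma pivot_pos: "k < n \<Longrightarrow> D $$ (k,k) > 0" using Dd by (simp add: pos_diag_def)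
lemma D_diagonal: "diagonal_mat D" using Dd by (rule pos_diag_diagonal)

definition "Dinv = diag_of n (\<lambda>i. 1 / D $$ (i,i))"
definition "Xinv = transpose_mat Q * Dinv * Q"

lemma Dinv_carrier[simp]: "Dinv \<in> carrier_mat n n" by (simp add: Dinv_def)
lemma Xinv_carrier[simp]: "Xinv \<in> carrier_mat n n" unfolding Xinv_def by (intro mat_mult_carrier_n) auto

lemma factor_dims[simp]: "dim_row L = n" "dim_col L = n" "dim_row D = n" "dim_col D = n"
  "dim_row Q = n" "dim_col Q = n" "dim_row Dinv = n" "dim_col Dinv = n" "dim_row Xinv = n" "dim_col Xinv = n"
  using L_carrier D_carrier QC Dinv_carrier Xinv_carrier by (auto simp del: L_carrier D_carrier QC Dinv_carrier Xinv_carrier)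

lemma D_Dinv: "D * Dinv = 1\<^sub>m n"
proof (rule eq_matI)
  fix i j assume "i < dim_row (1\<^sub>m n)" "j < dim_col (1\<^sub>m n)"
  then have ij: "i < n" "j < n" by auto
  have "(D * Dinv) $$ (i,j) = D $$ (i,i) * Dinv $$ (i,j)"
    by (rule mult_diag_left_index) (use ij D_diagonal in auto)
  then show "(D * Dinv) $$ (i,j) = 1\<^sub>m n $$ (i,j)"
    using ij pivot_pos[of i] by (auto simp: Dinv_def diag_of_index)
qed auto

lemma tL_tQ: "transpose_mat L * transpose_mat Q = 1\<^sub>m n"
  using transpose_mult[of Q n n L n] QL by simp

lemma tQ_tL: "transpose_mat Q * transpose_mat L = 1\<^sub>m n"
  using transpose_mult[of L n n Q n] LQ by simp

lemmas mat_ring_n = mat_mult_assoc_n[where n = n] mat_mult_carrier_n[where n = n]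
  mat_add_carrier_n[where n = n] mat_distrib_left_n[where n = n] mat_distrib_right_n[where n = n]
  mat_add_assoc_n[where n = n] mat_one_right_n[where n = n] mat_one_left_n[where n = n]

lemmas factor_cancel = mat_cancel_left[OF L_carrier QC _ LQ] mat_cancel_left[OF QC L_carrier _ QL]
  mat_cancel_left[OF D_carrier Dinv_carrier _ D_Dinv]
  mat_cancel_left[of "transpose_mat L" n "transpose_mat Q", OF _ _ _ tL_tQ]
  mat_cancel_left[of "transpose_mat Q" n "transpose_mat L", OF _ _ _ tQ_tL]
  LQ QL D_Dinv tL_tQ tQ_tL

lemma Xinv_is_mat_inv: "mat_inv n (L * D * transpose_mat L) = Xinv"
proof -
  have XP: "L * D * transpose_mat L * Xinv = 1\<^sub>m n"
    unfolding Xinv_def by (simp add: mat_ring_n factor_cancel)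
  have PX: "Xinv * (L * D * transpose_mat L) = 1\<^sub>m n"
    by (rule mat_mult_left_right_inverse[OF _ _ XP]) auto
  show ?thesis unfolding mat_inv_def
  proof (rule the_equality)
    fix B assume B: "B \<in> carrier_mat n n \<and> L * D * transpose_mat L * B = 1\<^sub>m n \<and> B * (L * D * transpose_mat L) = 1\<^sub>m n"
    then have Bc: "B \<in> carrier_mat n n" by simp
    then have "B = B * (L * D * transpose_mat L * Xinv)" using XP by simp
    also have "\<dots> = (B * (L * D * transpose_mat L)) * Xinv" using Bc by (simp add: mat_ring_n)
    finally show "B = Xinv" using B by simp
  qed (use XP PX in simp)
qed

lemma Xinv_index:
  assumes ab: "a < n" "b < n"
  shows "Xinv $$ (a,b) = (\<Sum>k<n. Q $$ (k,a) * Q $$ (k,b) / D $$ (k,k))"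
proof -
  have "Xinv $$ (a,b) = (transpose_mat Q * Dinv * transpose_mat (transpose_mat Q)) $$ (a,b)"
    by (simp add: Xinv_def)
  also have "\<dots> = (\<Sum>k<n. transpose_mat Q $$ (a,k) * Dinv $$ (k,k) * transpose_mat Q $$ (b,k))"
    by (rule congruence_diag_index) (use ab in \<open>auto simp: Dinv_def diag_of_diagonal\<close>)
  also have "\<dots> = (\<Sum>k<n. Q $$ (k,a) * Q $$ (k,b) / D $$ (k,k))"
    by (rule sum.cong) (use ab in \<open>auto simp: Dinv_def diag_of_index\<close>)
  finally show ?thesis .
qed

lemma trace_congruence_reduce:
  assumes KY[simp]: "KY \<in> carrier_mat n n" and KZ[simp]: "KZ \<in> carrier_mat n n"
  shows "mtrace (Xinv * (L * KY * transpose_mat L) * Xinv * (L * KZ * transpose_mat L))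
      = mtrace (Dinv * (KY * (Dinv * KZ)))"
proof -
  have "Xinv * (L * KY * transpose_mat L) * Xinv * (L * KZ * transpose_mat L)
     = transpose_mat Q * (Dinv * (KY * (Dinv * (KZ * transpose_mat L))))"
    unfolding Xinv_def by (simp add: mat_ring_n factor_cancel)
  then have "mtrace (Xinv * (L * KY * transpose_mat L) * Xinv * (L * KZ * transpose_mat L))
      = mtrace ((Dinv * (KY * (Dinv * (KZ * transpose_mat L)))) * transpose_mat Q)"
    using mtrace_comm[of "transpose_mat Q" n n "Dinv * (KY * (Dinv * (KZ * transpose_mat L)))"]
    by (simp add: mat_ring_n)
  also have "(Dinv * (KY * (Dinv * (KZ * transpose_mat L)))) * transpose_mat Q = Dinv * (KY * (Dinv * KZ))"
    by (simp add: mat_ring_n factor_cancel)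
  finally show ?thesis .
qed

lemma trace_scaled_index:
  assumes KY[simp]: "KY \<in> carrier_mat n n" and KZ[simp]: "KZ \<in> carrier_mat n n"
  shows "mtrace (Dinv * (KY * (Dinv * KZ)))
      = (\<Sum>i<n. \<Sum>j<n. KY $$ (i,j) * KZ $$ (j,i) / (D $$ (i,i) * D $$ (j,j)))"
proof -
  have Dinvd: "diagonal_mat Dinv" by (simp add: Dinv_def diag_of_diagonal)
  have "(Dinv * (KY * (Dinv * KZ))) $$ (i,i) = (\<Sum>j<n. KY $$ (i,j) * KZ $$ (j,i) / (D $$ (i,i) * D $$ (j,j)))"
    if i: "i < n" for i
  proof -
    have "(Dinv * (KY * (Dinv * KZ))) $$ (i,i) = Dinv $$ (i,i) * (KY * (Dinv * KZ)) $$ (i,i)"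
      by (rule mult_diag_left_index) (use i Dinvd in \<open>auto simp: mat_ring_n\<close>)
    also have "(KY * (Dinv * KZ)) $$ (i,i) = (\<Sum>j<n. KY $$ (i,j) * (Dinv * KZ) $$ (j,i))"
      using i carrier_matD[OF KY] carrier_matD[OF KZ] by (simp add: scalar_prod_def atLeast0LessThan mat_ring_n)
    also have "\<dots> = (\<Sum>j<n. KY $$ (i,j) * (Dinv $$ (j,j) * KZ $$ (j,i)))"
      by (rule sum.cong) (use i Dinvd mult_diag_left_index[of KZ n n Dinv] in auto)
    finally show ?thesis using i by (simp add: Dinv_def diag_of_index sum_distrib_left)
  qed
  then show ?thesis by (simp add: mtrace_def mat_ring_n)
qed

(* The congruence Q Y Q^T for Y = lp D L^T + L dp L^T + L D lp^T, i.e. M D + dp + D M^T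
   with M = Q lp. *)
definition "Kmat lp dp = Q * mat_of n lp * D + diag_of n dp + D * (transpose_mat (mat_of n lp) * transpose_mat Q)"

lemma Kmat_carrier[simp]: "Kmat lp dp \<in> carrier_mat n n"
  unfolding Kmat_def by (simp add: mat_ring_n)

lemma derivative_congruence:
  assumes YC: "Y \<in> carrier_mat n n"
    and Yf: "\<And>i j. i < n \<Longrightarrow> j < n \<Longrightarrow> Y $$ (i,j) = (\<Sum>k<n. lp i k * D $$ (k,k) * L $$ (j,k)
      + L $$ (i,k) * dp k * L $$ (j,k) + L $$ (i,k) * D $$ (k,k) * lp j k)"
  shows "Y = L * Kmat lp dp * transpose_mat L"
proof -
  have "Y = mat_of n lp * D * transpose_mat L + L * diag_of n dp * transpose_mat L + L * D * transpose_mat (mat_of n lp)"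
  proof (rule eq_matI)
    fix i j assume "i < dim_row (mat_of n lp * D * transpose_mat L + L * diag_of n dp * transpose_mat L + L * D * transpose_mat (mat_of n lp))"
      "j < dim_col (mat_of n lp * D * transpose_mat L + L * diag_of n dp * transpose_mat L + L * D * transpose_mat (mat_of n lp))"
    then have ij: "i < n" "j < n" by auto
    have e1: "(mat_of n lp * D * transpose_mat L) $$ (i,j) = (\<Sum>k<n. lp i k * D $$ (k,k) * L $$ (j,k))"
      using congruence_diag_index[of "mat_of n lp" n n L n D i j] ij D_diagonal by simp
    have e2: "(L * diag_of n dp * transpose_mat L) $$ (i,j) = (\<Sum>k<n. L $$ (i,k) * dp k * L $$ (j,k))"
      using congruence_diag_index[of L n n L n "diag_of n dp" i j] ij by (simp add: diag_of_diagonal diag_of_index)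
    have e3: "(L * D * transpose_mat (mat_of n lp)) $$ (i,j) = (\<Sum>k<n. L $$ (i,k) * D $$ (k,k) * lp j k)"
      using congruence_diag_index[of L n n "mat_of n lp" n D i j] ij D_diagonal by simp
    show "Y $$ (i,j) = (mat_of n lp * D * transpose_mat L + L * diag_of n dp * transpose_mat L + L * D * transpose_mat (mat_of n lp)) $$ (i,j)"
      using ij e1 e2 e3 Yf[OF ij] by (simp add: sum.distrib)
  qed (use YC in auto)
  also have "\<dots> = L * Kmat lp dp * transpose_mat L"
    unfolding Kmat_def by (simp add: mat_ring_n factor_cancel)
  finally show ?thesis .
qed

lemma Q_mult_strict_lower:
  assumes lp0: "\<And>i j. i < n \<Longrightarrow> j < n \<Longrightarrow> i \<le> j \<Longrightarrow> lp i j = 0"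
    and ij: "i < n" "j < n" "i \<le> j"
  shows "(Q * mat_of n lp) $$ (i,j) = 0"
proof -
  have "(Q * mat_of n lp) $$ (i,j) = (\<Sum>k<n. Q $$ (i,k) * lp k j)"
    using ij by (simp add: scalar_prod_def atLeast0LessThan)
  also have "\<dots> = 0"
  proof (rule sum.neutral, rule ballI)
    fix k assume k: "k \<in> {..<n}"
    show "Q $$ (i,k) * lp k j = 0"
    proof (cases "i < k")
      case True
      then show ?thesis using unit_lower_tri_inverse_lower[OF Lu QC LQ True] k by simp
    next
      case False
      then show ?thesis using lp0[of k j] k ij by simp
    qed
  qed
  finally show ?thesis .
qed

lemma Kmat_index:
  assumes ij: "i < n" "j < n"
  shows "Kmat lp dp $$ (i,j) = (Q * mat_of n lp) $$ (i,j) * D $$ (j,j) + (if i = j then dp i else 0)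
     + D $$ (i,i) * (Q * mat_of n lp) $$ (j,i)"
proof -
  have "(Q * mat_of n lp * D) $$ (i,j) = (Q * mat_of n lp) $$ (i,j) * D $$ (j,j)"
    by (rule mult_diag_right_index) (use ij D_diagonal in \<open>auto simp: mat_ring_n\<close>)
  moreover have "(D * (transpose_mat (mat_of n lp) * transpose_mat Q)) $$ (i,j)
      = D $$ (i,i) * (transpose_mat (mat_of n lp) * transpose_mat Q) $$ (i,j)"
    by (rule mult_diag_left_index) (use ij D_diagonal in \<open>auto simp: mat_ring_n\<close>)
  moreover have "transpose_mat (mat_of n lp) * transpose_mat Q = transpose_mat (Q * mat_of n lp)"
    using transpose_mult[of Q n n "mat_of n lp" n] by simp
  ultimately show ?thesis using ij unfolding Kmat_def by (simp add: diag_of_index)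
qed

(* Entrywise evaluation of tr(D^{-1} K D^{-1} K'): the cross terms vanish because M is strictly
   lower triangular, leaving the diagonal part and twice the part in M. *)
lemma trace_Kmat_expand:
  assumes lp0: "\<And>i j. i < n \<Longrightarrow> j < n \<Longrightarrow> i \<le> j \<Longrightarrow> lp i j = 0"
    and lq0: "\<And>i j. i < n \<Longrightarrow> j < n \<Longrightarrow> i \<le> j \<Longrightarrow> lq i j = 0"
  shows "(\<Sum>i<n. \<Sum>j<n. Kmat lp dp $$ (i,j) * Kmat lq dq $$ (j,i) / (D $$ (i,i) * D $$ (j,j)))
    = (\<Sum>j<n. dp j * dq j / (D $$ (j,j) * D $$ (j,j)) + 2 * D $$ (j,j) *
         (\<Sum>i<n. (Q * mat_of n lp) $$ (i,j) * (Q * mat_of n lq) $$ (i,j) / D $$ (i,i)))"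
proof -
  define MY where "MY i j = (Q * mat_of n lp) $$ (i,j)" for i j
  define MZ where "MZ i j = (Q * mat_of n lq) $$ (i,j)" for i j
  define h1 where "h1 i j = (if i = j then dp i * dq i / (D $$ (i,i) * D $$ (i,i)) else 0)" for i j
  define h2 where "h2 i j = MY i j * MZ i j * D $$ (j,j) / D $$ (i,i)" for i j
  have "(\<Sum>i<n. \<Sum>j<n. Kmat lp dp $$ (i,j) * Kmat lq dq $$ (j,i) / (D $$ (i,i) * D $$ (j,j)))
      = (\<Sum>i<n. \<Sum>j<n. h1 i j + h2 i j + h2 j i)"
  proof (intro sum.cong refl)
    fix i j assume "i \<in> {..<n}" "j \<in> {..<n}"
    then have i: "i < n" and j: "j < n" by auto
    have Di: "D $$ (i,i) > 0" and Dj: "D $$ (j,j) > 0" using pivot_pos i j by auto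
    have KY: "Kmat lp dp $$ (i,j) = MY i j * D $$ (j,j) + (if i = j then dp i else 0) + D $$ (i,i) * MY j i"
      using Kmat_index[OF i j] by (simp add: MY_def)
    have KZ: "Kmat lq dq $$ (j,i) = MZ j i * D $$ (i,i) + (if j = i then dq j else 0) + D $$ (j,j) * MZ i j"
      using Kmat_index[OF j i] by (simp add: MZ_def)
    have upper: "MY a b = 0" "MZ a b = 0" if "a < n" "b < n" "a \<le> b" for a b
      using Q_mult_strict_lower[OF lp0 that] Q_mult_strict_lower[OF lq0 that] by (auto simp: MY_def MZ_def)
    consider "i < j" | "i = j" | "j < i" by linarith
    then show "Kmat lp dp $$ (i,j) * Kmat lq dq $$ (j,i) / (D $$ (i,i) * D $$ (j,j)) = h1 i j + h2 i j + h2 j i"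
      unfolding KY KZ by cases (use upper[of i j] upper[of j i] i j Di Dj in
          \<open>simp_all add: h1_def h2_def field_simps power2_eq_square\<close>)
  qed
  also have "\<dots> = (\<Sum>i<n. \<Sum>j<n. h1 i j) + (\<Sum>i<n. \<Sum>j<n. h2 i j) + (\<Sum>i<n. \<Sum>j<n. h2 j i)"
    by (simp add: sum.distrib)
  also have "(\<Sum>i<n. \<Sum>j<n. h2 j i) = (\<Sum>i<n. \<Sum>j<n. h2 i j)"
    by (rule sum.swap)
  also have "(\<Sum>i<n. \<Sum>j<n. h1 i j) = (\<Sum>j<n. dp j * dq j / (D $$ (j,j) * D $$ (j,j)))"
    by (intro sum.cong refl) (simp add: h1_def)
  also have "(\<Sum>i<n. \<Sum>j<n. h2 i j) = (\<Sum>j<n. D $$ (j,j) * (\<Sum>i<n. MY i j * MZ i j / D $$ (i,i)))"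
    by (subst sum.swap) (simp add: h2_def sum_distrib_left algebra_simps)
  finally show ?thesis
    by (simp add: MY_def MZ_def sum.distrib sum_distrib_left algebra_simps)
qed

lemma column_inner_Xinv:
  assumes j: "j < n"
  shows "(\<Sum>i<n. (Q * mat_of n lp) $$ (i,j) * (Q * mat_of n lq) $$ (i,j) / D $$ (i,i))
       = (\<Sum>a<n. \<Sum>b<n. lp a j * Xinv $$ (a,b) * lq b j)"
proof -
  have ME: "(Q * mat_of n f) $$ (i,j) = (\<Sum>a<n. Q $$ (i,a) * f a j)" if "i < n" for i f
    using that j by (simp add: scalar_prod_def atLeast0LessThan)
  have "(\<Sum>i<n. (Q * mat_of n lp) $$ (i,j) * (Q * mat_of n lq) $$ (i,j) / D $$ (i,i))
     = (\<Sum>i<n. \<Sum>a<n. \<Sum>b<n. lp a j * (Q $$ (i,a) * Q $$ (i,b) / D $$ (i,i)) * lq b j)"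
    by (intro sum.cong refl)
      (simp add: ME sum_product sum_divide_distrib algebra_simps)
  also have "\<dots> = (\<Sum>a<n. \<Sum>b<n. \<Sum>i<n. lp a j * (Q $$ (i,a) * Q $$ (i,b) / D $$ (i,i)) * lq b j)"
    by (subst sum.swap, rule sum.cong[OF refl], rule sum.swap)
  also have "\<dots> = (\<Sum>a<n. \<Sum>b<n. lp a j * Xinv $$ (a,b) * lq b j)"
    by (intro sum.cong refl) (simp add: Xinv_index sum_distrib_left sum_distrib_right)
  finally show ?thesis .
qed

lemma trace_formula_factors:
  assumes YC: "Y \<in> carrier_mat n n"
    and Yf: "\<And>i j. i < n \<Longrightarrow> j < n \<Longrightarrow> Y $$ (i,j) = (\<Sum>k<n. lp i k * D $$ (k,k) * L $$ (j,k)
      + L $$ (i,k) * dp k * L $$ (j,k) + L $$ (i,k) * D $$ (k,k) * lp j k)"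
    and lp0: "\<And>i j. i < n \<Longrightarrow> j < n \<Longrightarrow> i \<le> j \<Longrightarrow> lp i j = 0"
    and ZC: "Z \<in> carrier_mat n n"
    and Zf: "\<And>i j. i < n \<Longrightarrow> j < n \<Longrightarrow> Z $$ (i,j) = (\<Sum>k<n. lq i k * D $$ (k,k) * L $$ (j,k)
      + L $$ (i,k) * dq k * L $$ (j,k) + L $$ (i,k) * D $$ (k,k) * lq j k)"
    and lq0: "\<And>i j. i < n \<Longrightarrow> j < n \<Longrightarrow> i \<le> j \<Longrightarrow> lq i j = 0"
  shows "mtrace (mat_inv n (L * D * transpose_mat L) * Y * mat_inv n (L * D * transpose_mat L) * Z)
      = factor_form n D (mat_inv n (L * D * transpose_mat L)) lp dp lq dq"
proof -
  have "mtrace (Xinv * Y * Xinv * Z)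
      = mtrace (Xinv * (L * Kmat lp dp * transpose_mat L) * Xinv * (L * Kmat lq dq * transpose_mat L))"
    using derivative_congruence[OF YC Yf] derivative_congruence[OF ZC Zf] by simp
  also have "\<dots> = (\<Sum>i<n. \<Sum>j<n. Kmat lp dp $$ (i,j) * Kmat lq dq $$ (j,i) / (D $$ (i,i) * D $$ (j,j)))"
    by (simp add: trace_congruence_reduce trace_scaled_index)
  also have "\<dots> = (\<Sum>j<n. dp j * dq j / (D $$ (j,j) * D $$ (j,j)) + 2 * D $$ (j,j) *
         (\<Sum>i<n. (Q * mat_of n lp) $$ (i,j) * (Q * mat_of n lq) $$ (i,j) / D $$ (i,i)))"
    by (rule trace_Kmat_expand[OF lp0 lq0])
  also have "\<dots> = factor_form n D Xinv lp dp lq dq"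
    unfolding factor_form_def by (rule sum.cong[OF refl]) (simp only: column_inner_Xinv lessThan_iff)
  finally show ?thesis by (simp add: Xinv_is_mat_inv)
qed

end

lemma hessian_trace_formula:
  assumes fil: "filled V" and XV: "in_SV n V X" and YV: "in_SV n V Y" and ZV: "in_SV n V Z"
    and ldl: "is_ldl n X L D"
  shows "mtrace (mat_inv n X * Y * mat_inv n X * Z)
      = factor_form n D (mat_inv n X) (dL n X Y) (dD n X Y) (dL n X Z) (dD n X Z)"
proof -
  have Lu: "unit_lower_tri n L" and Dd: "pos_diag n D" and X: "X = L * D * transpose_mat L"
    using ldl by (auto simp: is_ldl_def)
  obtain Q where QC: "Q \<in> carrier_mat n n" and LQ: "L * Q = 1\<^sub>m n" and QL: "Q * L = 1\<^sub>m n"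
    using unit_lower_tri_invertible[OF Lu] by blast
  have "mtrace (mat_inv n (L * D * transpose_mat L) * Y * mat_inv n (L * D * transpose_mat L) * Z)
      = factor_form n D (mat_inv n (L * D * transpose_mat L)) (dL n X Y) (dD n X Y) (dL n X Z) (dD n X Z)"
    by (rule trace_formula_factors[OF Lu Dd QC LQ QL])
      (use YV ZV ldl_derivative_identity[OF fil XV YV ldl] ldl_derivative_identity[OF fil XV ZV ldl]
        dL_outside_pattern[OF fil XV YV ldl] dL_outside_pattern[OF fil XV ZV ldl] in \<open>auto simp: in_SV_def\<close>)
  then show ?thesis using X by simp
qed


lemma pos_idx:
  assumes fin: "finite I" and a: "a < card I"
  shows "pos I (idx I a) = a"
proof -
  define xs where "xs = sorted_list_of_set I"
  have st: "sorted_wrt (<) xs" unfolding xs_def by (rule strict_sorted_list_of_set)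
  have len: "length xs = card I" and set: "set xs = I" and dist: "distinct xs"
    unfolding xs_def using fin by simp_all
  have "{k \<in> I. k < xs ! a} = (\<lambda>b. xs ! b) ` {..<a}"
  proof
    show "{k \<in> I. k < xs ! a} \<subseteq> (\<lambda>b. xs ! b) ` {..<a}"
    proof
      fix k assume k: "k \<in> {k \<in> I. k < xs ! a}"
      then obtain b where b: "b < length xs" "k = xs ! b" using set by (auto simp: in_set_conv_nth)
      have "b < a"
      proof (rule ccontr)
        assume "\<not> b < a"
        then have "xs ! a \<le> xs ! b" using sorted_wrt_nth_less[OF st, of a b] b by (cases "a = b") auto
        then show False using k b by auto
      qed
      then show "k \<in> (\<lambda>b. xs ! b) ` {..<a}" using b by auto
    qed
    show "(\<lambda>b. xs ! b) ` {..<a} \<subseteq> {k \<in> I. k < xs ! a}"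
      using sorted_wrt_nth_less[OF st] a len set by auto
  qed
  moreover have "inj_on (\<lambda>b. xs ! b) {..<a}"
    using dist a len by (auto simp: inj_on_def nth_eq_iff_index_eq)
  ultimately have "card {k \<in> I. k < xs ! a} = a" by (simp add: card_image)
  then show ?thesis unfolding pos_def idx_def xs_def by simp
qed

lemma sum_over_idx:
  assumes fin: "finite I"
  shows "(\<Sum>i\<in>I. h i) = (\<Sum>a<card I. h (idx I a))"
proof -
  have "bij_betw (idx I) {..<card I} I"
    unfolding idx_def[abs_def] by (rule bij_betw_nth) (use fin in simp_all)
  then show ?thesis by (rule sum.reindex_bij_betw[symmetric])
qed

lemma Iset_subset: "sparsity_pattern n V \<Longrightarrow> Iset V j \<subseteq> {..<n}"
  unfolding sparsity_pattern_def Iset_def by auto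

lemma Iset_finite: "sparsity_pattern n V \<Longrightarrow> finite (Iset V j)"
  by (rule finite_subset[OF Iset_subset]) auto

(* Fillness: I_j x I_j lies in the pattern, so projecting onto S^n_V keeps the block on I_j. *)
lemma proj_SV_on_Iset:
  assumes sp: "sparsity_pattern n V" and fil: "filled V"
    and i: "i \<in> Iset V j" and k: "k \<in> Iset V j"
  shows "proj_SV n V P $$ (i,k) = P $$ (i,k)"
proof -
  have "i < n" "k < n" using Iset_subset[OF sp] i k by auto
  moreover have "(max i k, min i k) \<in> V"
  proof -
    have ij: "j < i" "(i,j) \<in> V" "j < k" "(k,j) \<in> V" using i k by (auto simp: Iset_def)
    consider "i = k" | "k < i" | "i < k" by linarith
    then show ?thesis
    proof cases
      case 1
      then show ?thesis using sp \<open>i < n\<close> by (simp add: sparsity_pattern_def)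
    next
      case 2
      then have "(i,k) \<in> V" using fil[unfolded filled_def, rule_format, of k i j] ij by blast
      then show ?thesis using 2 by (simp add: max_def min_def)
    next
      case 3
      then have "(k,i) \<in> V" using fil[unfolded filled_def, rule_format, of i k j] ij by blast
      then show ?thesis using 3 by (simp add: max_def min_def)
    qed
  qed
  ultimately show ?thesis by (simp add: proj_SV_def)
qed

lemma Rmap_trace_columns:
  assumes sp: "sparsity_pattern n V"
  shows "mtrace (Rmap n V X D R Y * Rmap n V X D R Z)
      = (\<Sum>j<n. dD n X Y j * dD n X Z j / (D $$ (j,j) * D $$ (j,j))
        + 2 * (\<Sum>a<card (Iset V j). Wcol n V X D R Y j $ a * Wcol n V X D R Z j $ a))"
proof -
  define wY where "wY j = Wcol n V X D R Y j" for j
  define wZ where "wZ j = Wcol n V X D R Z j" for j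
  define g where "g i j = (if j < i \<and> i \<in> Iset V j then wY j $ pos (Iset V j) i * wZ j $ pos (Iset V j) i else 0)" for i j
  define h where "h i j = (if i = j then dD n X Y j / D $$ (j,j) * (dD n X Z j / D $$ (j,j)) else 0)" for i j
  have columns: "(\<Sum>i<n. g i j) = (\<Sum>a<card (Iset V j). wY j $ a * wZ j $ a)" for j
  proof -
    let ?I = "Iset V j"
    have fin: "finite ?I" and sub: "?I \<subseteq> {..<n}" using Iset_finite[OF sp] Iset_subset[OF sp] by auto
    have "(\<Sum>i<n. g i j) = (\<Sum>i\<in>?I. wY j $ pos ?I i * wZ j $ pos ?I i)"
      using sub by (auto simp: g_def Iset_def intro!: sum.mono_neutral_cong_right)
    also have "\<dots> = (\<Sum>a<card ?I. wY j $ a * wZ j $ a)"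
      by (simp add: sum_over_idx[OF fin] pos_idx[OF fin])
    finally show ?thesis .
  qed
  have "mtrace (Rmap n V X D R Y * Rmap n V X D R Z)
      = (\<Sum>i<n. \<Sum>j<n. Rmap n V X D R Y $$ (i,j) * Rmap n V X D R Z $$ (j,i))"
    by (simp add: mtrace_def Rmap_def scalar_prod_def atLeast0LessThan)
  also have "\<dots> = (\<Sum>i<n. \<Sum>j<n. h i j + g i j + g j i)"
    by (intro sum.cong refl) (auto simp: Rmap_def h_def g_def wY_def wZ_def)
  also have "\<dots> = (\<Sum>i<n. \<Sum>j<n. h i j) + (\<Sum>j<n. \<Sum>i<n. g i j) + (\<Sum>j<n. \<Sum>i<n. g i j)"
    by (simp add: sum.distrib sum.swap[of "\<lambda>i j. g i j"])
  also have "\<dots> = (\<Sum>j<n. dD n X Y j * dD n X Z j / (D $$ (j,j) * D $$ (j,j))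
        + 2 * (\<Sum>a<card (Iset V j). wY j $ a * wZ j $ a))"
    by (simp add: columns h_def sum.distrib sum_distrib_left)
  finally show ?thesis by (simp add: wY_def wZ_def)
qed

lemma Wcol_entry:
  assumes Rc: "R j \<in> carrier_mat (card (Iset V j)) (card (Iset V j))" and a: "a < card (Iset V j)"
  shows "Wcol n V X D R Y j $ a = sqrt (D $$ (j,j)) *
     (\<Sum>b<card (Iset V j). R j $$ (b,a) * dL n X Y (idx (Iset V j) b) j)"
  using Rc a by (simp add: Wcol_def scalar_prod_def atLeast0LessThan)

lemma Wcol_inner_submat:
  fixes j n :: nat and V :: "(nat \<times> nat) set" and X D S Y Z :: "real mat" and R :: "nat \<Rightarrow> real mat"
  defines "I \<equiv> Iset V j"
  assumes Rc: "R j \<in> carrier_mat (card I) (card I)"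
    and RR: "submat S I = R j * transpose_mat (R j)"
    and Dj: "D $$ (j,j) \<ge> 0"
  shows "(\<Sum>a<card I. Wcol n V X D R Y j $ a * Wcol n V X D R Z j $ a)
    = D $$ (j,j) * (\<Sum>b<card I. \<Sum>c<card I. dL n X Y (idx I b) j * S $$ (idx I b, idx I c) * dL n X Z (idx I c) j)"
proof -
  let ?c = "card I"
  let ?fY = "\<lambda>b. dL n X Y (idx I b) j" and ?fZ = "\<lambda>b. dL n X Z (idx I b) j"
  have RRe: "S $$ (idx I b, idx I c) = (\<Sum>a<?c. R j $$ (b,a) * R j $$ (c,a))"
    if "b < ?c" "c < ?c" for b c
  proof -
    have "S $$ (idx I b, idx I c) = (R j * transpose_mat (R j)) $$ (b,c)"
      using that RR[symmetric] by (simp add: submat_def)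
    also have "\<dots> = (\<Sum>a<?c. R j $$ (b,a) * R j $$ (c,a))"
      using Rc that by (simp add: scalar_prod_def atLeast0LessThan)
    finally show ?thesis .
  qed
  have "(\<Sum>a<?c. Wcol n V X D R Y j $ a * Wcol n V X D R Z j $ a)
     = (\<Sum>a<?c. (sqrt (D $$ (j,j)) * (\<Sum>b<?c. R j $$ (b,a) * ?fY b)) * (sqrt (D $$ (j,j)) * (\<Sum>c<?c. R j $$ (c,a) * ?fZ c)))"
    using Wcol_entry[where R=R and V=V and j=j] Rc unfolding I_def by simp
  also have "\<dots> = (\<Sum>a<?c. D $$ (j,j) * ((\<Sum>b<?c. R j $$ (b,a) * ?fY b) * (\<Sum>c<?c. R j $$ (c,a) * ?fZ c)))"
    by (intro sum.cong refl) (use Dj in \<open>simp add: algebra_simps real_sqrt_mult[symmetric]\<close>)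
  also have "\<dots> = D $$ (j,j) * (\<Sum>a<?c. \<Sum>b<?c. \<Sum>c<?c. ?fY b * ?fZ c * (R j $$ (b,a) * R j $$ (c,a)))"
    unfolding sum_product by (simp add: sum_distrib_left mult_ac)
  also have "(\<Sum>a<?c. \<Sum>b<?c. \<Sum>c<?c. ?fY b * ?fZ c * (R j $$ (b,a) * R j $$ (c,a)))
      = (\<Sum>b<?c. \<Sum>c<?c. \<Sum>a<?c. ?fY b * ?fZ c * (R j $$ (b,a) * R j $$ (c,a)))"
    by (subst sum.swap, rule sum.cong[OF refl], rule sum.swap)
  also have "\<dots> = (\<Sum>b<?c. \<Sum>c<?c. ?fY b * S $$ (idx I b, idx I c) * ?fZ c)"
    by (intro sum.cong refl) (simp add: RRe sum_distrib_left algebra_simps)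
  finally show ?thesis .
qed

(* Since L'(:,j) is supported on I_j and S agrees with P on I_j x I_j, the column inner product
   equals D_jj L'_Y(:,j)^T P L'_Z(:,j). *)
lemma Wcol_inner_form:
  assumes sp: "sparsity_pattern n V" and fil: "filled V" and j: "j < n"
    and Rj: "Iset V j \<noteq> {} \<Longrightarrow> R j \<in> carrier_mat (card (Iset V j)) (card (Iset V j))
      \<and> submat S (Iset V j) = R j * transpose_mat (R j)"
    and S: "S = proj_SV n V P" and Dj: "D $$ (j,j) \<ge> 0"
    and zY: "\<And>a. a < n \<Longrightarrow> a \<notin> Iset V j \<Longrightarrow> dL n X Y a j = 0"
    and zZ: "\<And>a. a < n \<Longrightarrow> a \<notin> Iset V j \<Longrightarrow> dL n X Z a j = 0"
  shows "(\<Sum>a<card (Iset V j). Wcol n V X D R Y j $ a * Wcol n V X D R Z j $ a)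
    = D $$ (j,j) * (\<Sum>a<n. \<Sum>b<n. dL n X Y a j * P $$ (a,b) * dL n X Z b j)"
proof -
  let ?I = "Iset V j"
  have fin: "finite ?I" and sub: "?I \<subseteq> {..<n}" using Iset_finite[OF sp] Iset_subset[OF sp] by auto
  have restrict: "(\<Sum>a<n. \<Sum>b<n. dL n X Y a j * P $$ (a,b) * dL n X Z b j)
      = (\<Sum>a\<in>?I. \<Sum>b\<in>?I. dL n X Y a j * P $$ (a,b) * dL n X Z b j)"
  proof -
    have "(\<Sum>a<n. \<Sum>b<n. dL n X Y a j * P $$ (a,b) * dL n X Z b j)
        = (\<Sum>a<n. \<Sum>b\<in>?I. dL n X Y a j * P $$ (a,b) * dL n X Z b j)"
      by (intro sum.cong refl sum.mono_neutral_right) (use sub zZ in auto)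
    also have "\<dots> = (\<Sum>a\<in>?I. \<Sum>b\<in>?I. dL n X Y a j * P $$ (a,b) * dL n X Z b j)"
      by (intro sum.mono_neutral_right) (use sub zY in auto)
    finally show ?thesis .
  qed
  show ?thesis
  proof (cases "?I = {}")
    case True
    then show ?thesis using restrict by simp
  next
    case False
    have "(\<Sum>a<card ?I. Wcol n V X D R Y j $ a * Wcol n V X D R Z j $ a)
      = D $$ (j,j) * (\<Sum>b<card ?I. \<Sum>c<card ?I. dL n X Y (idx ?I b) j * S $$ (idx ?I b, idx ?I c) * dL n X Z (idx ?I c) j)"
      by (rule Wcol_inner_submat) (use Rj[OF False] Dj in auto)
    also have "(\<Sum>b<card ?I. \<Sum>c<card ?I. dL n X Y (idx ?I b) j * S $$ (idx ?I b, idx ?I c) * dL n X Z (idx ?I c) j)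
        = (\<Sum>a\<in>?I. \<Sum>b\<in>?I. dL n X Y a j * S $$ (a,b) * dL n X Z b j)"
      by (simp add: sum_over_idx[OF fin])
    also have "\<dots> = (\<Sum>a\<in>?I. \<Sum>b\<in>?I. dL n X Y a j * P $$ (a,b) * dL n X Z b j)"
      by (intro sum.cong refl) (simp add: S proj_SV_on_Iset[OF sp fil])
    finally show ?thesis using restrict by simp
  qed
qed

lemma Rmap_trace_formula:
  assumes sp: "sparsity_pattern n V" and fil: "filled V"
    and Rp: "\<forall>j<n. Iset V j \<noteq> {} \<longrightarrow>
           R j \<in> carrier_mat (card (Iset V j)) (card (Iset V j)) \<and> submat S (Iset V j) = R j * transpose_mat (R j)"
    and S: "S = proj_SV n V P"
    and Dpos: "\<And>j. j < n \<Longrightarrow> D $$ (j,j) > 0"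
    and zY: "\<And>i j. i < n \<Longrightarrow> j < n \<Longrightarrow> \<not> (j < i \<and> (i,j) \<in> V) \<Longrightarrow> dL n X Y i j = 0"
    and zZ: "\<And>i j. i < n \<Longrightarrow> j < n \<Longrightarrow> \<not> (j < i \<and> (i,j) \<in> V) \<Longrightarrow> dL n X Z i j = 0"
  shows "mtrace (Rmap n V X D R Y * Rmap n V X D R Z)
      = factor_form n D P (dL n X Y) (dD n X Y) (dL n X Z) (dD n X Z)"
proof -
  have "(\<Sum>a<card (Iset V j). Wcol n V X D R Y j $ a * Wcol n V X D R Z j $ a)
      = D $$ (j,j) * (\<Sum>a<n. \<Sum>b<n. dL n X Y a j * P $$ (a,b) * dL n X Z b j)" if j: "j < n" for j
    by (rule Wcol_inner_form[OF sp fil j _ S])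
      (use Rp Dpos[OF j] zY zZ j in \<open>auto simp: Iset_def less_imp_le\<close>)
  then show ?thesis
    unfolding Rmap_trace_columns[OF sp] factor_form_def by (intro sum.cong refl) simp
qed

theorem mainTheorem7:
  fixes n :: nat and V :: "(nat \<times> nat) set" and X L D S Y Z :: "real mat"
    and R :: "nat \<Rightarrow> real mat"
  assumes "sparsity_pattern n V" and "filled V"
    and "in_SV n V X" and "pos_def n X"
    and "is_ldl n X L D"
    and "S = proj_SV n V (mat_inv n X)"
    and "\<forall>j<n. Iset V j \<noteq> {} \<longrightarrow>
           R j \<in> carrier_mat (card (Iset V j)) (card (Iset V j)) \<and> upper_triangular (R j) \<and>
           submat S (Iset V j) = R j * transpose_mat (R j)"
    and "in_SV n V Y" and "in_SV n V Z"
  shows "mtrace (mat_inv n X * Y * mat_inv n X * Z) = mtrace (Rmap n V X D R Y * Rmap n V X D R Z)"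
proof -
  note sp = assms(1) and fil = assms(2) and XV = assms(3) and ldl = assms(5)
    and YV = assms(8) and ZV = assms(9)
  have Dpos: "\<And>j. j < n \<Longrightarrow> D $$ (j,j) > 0"
    using ldl by (simp add: is_ldl_def pos_diag_def)
  have Rp: "\<forall>j<n. Iset V j \<noteq> {} \<longrightarrow> R j \<in> carrier_mat (card (Iset V j)) (card (Iset V j))
      \<and> submat S (Iset V j) = R j * transpose_mat (R j)"
    using assms(7) by blast
  have "mtrace (mat_inv n X * Y * mat_inv n X * Z)
      = factor_form n D (mat_inv n X) (dL n X Y) (dD n X Y) (dL n X Z) (dD n X Z)"
    by (rule hessian_trace_formula[OF fil XV YV ZV ldl])
  also have "\<dots> = mtrace (Rmap n V X D R Y * Rmap n V X D R Z)"
    by (rule Rmap_trace_formula[symmetric, OF sp fil Rp assms(6) Dpos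
          dL_outside_pattern[OF fil XV YV ldl] dL_outside_pattern[OF fil XV ZV ldl]])
  finally show ?thesis .
qed

end
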